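(* Let $(N,\underline X)\in\aleph^{FGM*}$. For every $n\in A_N$ and $x\ge0$, $$F_{X\mid N=n}(x)=\frac{1}{\gamma_N(n)}\sum_{(i_0,i_1)\in\{0,1\}^2}f_{I_0,I_1}(i_0,i_1)\,\gamma_{N_{[1+i_0]}}(n)\,F_{X_{[1+i_1]}}(x),$$ where $f_{I_0,I_1}(i_0,i_1)=\tfrac14\big(1+(-1)^{i_0+i_1}\theta_{01}\big)$, or equivalently $$F_{X\mid N=n}(x)=F_X(x)+\frac{\theta_{01}}{4}\,\frac{\gamma_{N_{[2]}}(n)-\gamma_{N_{[1]}}(n)}{\gamma_N(n)}\big(F_{X_{[2]}}(x)-F_{X_{[1]}}(x)\big).$$ Here $F_{X\mid N=n}$ is the conditional cdf of $X_1$ given $N=n$ (which, by exchangeability, is that of any $X_j$).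
   Context: Collective risk model (CRM): $N$ is a random variable with values in $\mathbb{N}_0$, cdf $F_N$, pmf $\gamma_N(n)=\Pr(N=n)$ and support $A_N=\{n:\gamma_N(n)>0\}$; $\underline X=\{X_j\}_{j\ge1}$ is a sequence of identically distributed strictly positive random variables with common cdf $F_X$ (generic copy $X$). A $d$-variate FGM copula with parameters $\theta_{j_1\dots j_k}$ is $C(u_1,\dots,u_d)=\prod_{m=1}^d u_m\big(1+\sum_{k=2}^d\sum_{j_1<\dots<j_k}\theta_{j_1\dots j_k}\bar u_{j_1}\cdots\bar u_{j_k}\big)$, $\bar u=1-u$, with parameters such that $1+\sum_{k}\sum_{j_1<\dots<j_k}\theta_{j_1\dots j_k}\varepsilon_{j_1}\cdots\varepsilon_{j_k}\ge0$ for all $\varepsilon\in\{-1,1\}^d$. A CRM belongs to $\aleph^{FGM}$ if for every $k\in\mathbb{N}_1$, $k\le\sup A_N$, $F_{N,X_1,\dots,X_k}(n,x_1,\dots,x_k)=C_k(F_N(n),F_X(x_1),\dots,F_X(x_k))$ for a $(k+1)$-variate FGM copula $C_k$ with coordinates indexed $0,\dots,k$ (index $0$ for $N$). It belongs to $\aleph^{FGM*}$ if in addition $(N,X_1,\dots,X_k)\overset d=(N,X_{\pi(1)},\dots,X_{\pi(k)})$ for all such $k$ and all permutations $\pi$; then $\theta_{0j}=\theta_{01}$, $\theta_{ij}=\theta_{12}$, $\theta_{0ij}=\theta_{012}$ for all $1\le i<j$. For a random variable $Y$, $Y_{[1]}$, $Y_{[2]}$ denote the minimum and maximum of two iid copies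 of $Y$, with cdfs $F_{Y_{[j]}}$; $\gamma_{N_{[j]}}(n)=\Pr(N_{[j]}=n)$. *)

theory Defs
  imports "HOL-Probability.Probability" "HOL-Combinatorics.Permutations"
begin

definition FGM_copula :: "nat \<Rightarrow> (nat set \<Rightarrow> real) \<Rightarrow> (nat \<Rightarrow> real) \<Rightarrow> real" where
  "FGM_copula k \<theta> u =
     (\<Prod>m\<le>k. u m) *
     (1 + (\<Sum>S\<in>{S. S \<subseteq> {..k} \<and> 2 \<le> card S}. \<theta> S * (\<Prod>j\<in>S. 1 - u j)))"

definition FGM_params :: "nat \<Rightarrow> (nat set \<Rightarrow> real) \<Rightarrow> bool" where
  "FGM_params k \<theta> \<longleftrightarrow>
     (\<forall>\<epsilon>::nat \<Rightarrow> real. (\<forall>j\<le>k. \<epsilon> j \<in> {-1, 1}) \<longrightarrow>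
        0 \<le> 1 + (\<Sum>S\<in>{S. S \<subseteq> {..k} \<and> 2 \<le> card S}. \<theta> S * (\<Prod>j\<in>S. \<epsilon> j)))"

text \<open>Membership of (N, X) in aleph^{FGM*}: for each k >= 1 with k <= sup A_N the
  joint cdf of (N, X_1..X_k) is an FGM copula (parameters theta k) evaluated at the
  marginal cdfs, and (N, X_1..X_k) is invariant in distribution under permutations
  of X_1..X_k.\<close>
definition CRM_FGM_star ::
  "'a measure \<Rightarrow> ('a \<Rightarrow> nat) \<Rightarrow> (nat \<Rightarrow> 'a \<Rightarrow> real) \<Rightarrow> (nat \<Rightarrow> nat set \<Rightarrow> real) \<Rightarrow> bool" where
  "CRM_FGM_star M N X \<theta> \<longleftrightarrow>
     prob_space M \<and>
     N \<in> measurable M (count_space UNIV) \<and>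
     (\<forall>j\<ge>1. X j \<in> borel_measurable M) \<and>
     (\<forall>j\<ge>1. \<forall>\<omega>\<in>space M. 0 < X j \<omega>) \<and>
     (\<forall>j\<ge>1. distr M borel (X j) = distr M borel (X 1)) \<and>
     (\<forall>k\<ge>1. (\<exists>n. 0 < measure M {\<omega>\<in>space M. N \<omega> = n} \<and> k \<le> n) \<longrightarrow>
        FGM_params k (\<theta> k) \<and>
        (\<forall>(n::nat) (x::nat \<Rightarrow> real).
           measure M {\<omega>\<in>space M. N \<omega> \<le> n \<and> (\<forall>j\<in>{1..k}. X j \<omega> \<le> x j)} =
           FGM_copula k (\<theta> k)
             (\<lambda>m. if m = 0 then measure M {\<omega>\<in>space M. N \<omega> \<le> n}
                  else measure M {\<omega>\<in>space M. X 1 \<omega> \<le> x m})) \<and>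
        (\<forall>\<pi>. \<pi> permutes {1..k} \<longrightarrow>
           distr M (count_space UNIV \<Otimes>\<^sub>M PiM {1..k} (\<lambda>_. borel))
             (\<lambda>\<omega>. (N \<omega>, \<lambda>j\<in>{1..k}. X j \<omega>)) =
           distr M (count_space UNIV \<Otimes>\<^sub>M PiM {1..k} (\<lambda>_. borel))
             (\<lambda>\<omega>. (N \<omega>, \<lambda>j\<in>{1..k}. X (\<pi> j) \<omega>))))"

definition ord_cdf :: "real measure \<Rightarrow> nat \<Rightarrow> real \<Rightarrow> real" where
  "ord_cdf D j x = measure (D \<Otimes>\<^sub>M D)
     {(a, b) \<in> space (D \<Otimes>\<^sub>M D). (if j = 1 then min a b else max a b) \<le> x}"

definition ord_pmf :: "nat measure \<Rightarrow> nat \<Rightarrow> nat \<Rightarrow> real" where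
  "ord_pmf D j n = measure (D \<Otimes>\<^sub>M D)
     {(a, b) \<in> space (D \<Otimes>\<^sub>M D). (if j = 1 then min a b else max a b) = n}"

end

theory Submission imports Defs begin

text \<open>Only the pair \<open>(N, X\<^sub>1)\<close> matters, and its joint cdf is the bivariate FGM copula
  \<open>C(u, v) = u v (1 + \<theta>\<^sub>0\<^sub>1 (1 - u)(1 - v))\<close> at \<open>(F\<^sub>N(m), F\<^sub>X(x))\<close>.  With \<open>a = F\<^sub>N(n)\<close>,
  \<open>q = F\<^sub>N(n - 1)\<close> and \<open>F = F\<^sub>X(x)\<close> we get \<open>Pr(X\<^sub>1 \<le> x, N = n) = C(a, F) - C(q, F)\<close>,
  while \<open>\<gamma>\<^sub>N\<^sub>[\<^sub>2\<^sub>](n) = a\<^sup>2 - q\<^sup>2\<close>, \<open>\<gamma>\<^sub>N\<^sub>[\<^sub>1\<^sub>](n) = (1 - q)\<^sup>2 - (1 - a)\<^sup>2\<close>, \<open>F\<^sub>X\<^sub>[\<^sub>2\<^sub>] = F\<^sup>2\<close> and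
  \<open>F\<^sub>X\<^sub>[\<^sub>1\<^sub>] = 1 - (1 - F)\<^sup>2\<close>; both formulas are then polynomial identities in \<open>a, q, F\<close>.
  If \<open>N = 0\<close> almost surely the copula hypothesis is void, but then \<open>C(1, F) = F\<close> holds
  trivially.\<close>

definition FGM_copula2 :: "real \<Rightarrow> real \<Rightarrow> real \<Rightarrow> real" where
  "FGM_copula2 t u v = u * v * (1 + t * (1 - u) * (1 - v))"

lemma FGM_copula_1: "FGM_copula 1 \<theta> u = FGM_copula2 (\<theta> {0, 1}) (u 0) (u 1)"
proof -
  have "{S. S \<subseteq> {..1::nat} \<and> 2 \<le> card S} = {{0, 1}}"
  proof (intro set_eqI iffI)
    fix S :: "nat set" assume "S \<in> {S. S \<subseteq> {..1} \<and> 2 \<le> card S}"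
    then have "S \<subseteq> {0, 1}" "card {0, 1::nat} \<le> card S" by auto
    then show "S \<in> {{0, 1}}" by (simp add: card_seteq)
  qed auto
  moreover have "{..1::nat} = {0, 1}" by auto
  ultimately show ?thesis by (simp add: FGM_copula_def FGM_copula2_def algebra_simps)
qed

lemma FGM_copula2_increment_mixture:
  fixes P C :: "nat \<Rightarrow> real"
  assumes "P 1 = (1 - q)\<^sup>2 - (1 - a)\<^sup>2" "P 2 = a\<^sup>2 - q\<^sup>2"
    and "C 1 = 1 - (1 - F)\<^sup>2" "C 2 = F\<^sup>2"
  shows "FGM_copula2 t a F - FGM_copula2 t q F =
    (\<Sum>i0\<in>{0, 1::nat}. \<Sum>i1\<in>{0, 1::nat}. (1 + (-1) ^ (i0 + i1) * t) / 4 * P (1 + i0) * C (1 + i1))"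
proof -
  have "(\<Sum>i0\<in>{0, 1::nat}. \<Sum>i1\<in>{0, 1::nat}. (1 + (-1) ^ (i0 + i1) * t) / 4 * P (1 + i0) * C (1 + i1))
      = ((1 + t) * P 1 * C 1 + (1 - t) * P 1 * C 2 + (1 - t) * P 2 * C 1 + (1 + t) * P 2 * C 2) / 4"
    by (simp add: numeral_2_eq_2 field_simps)
  then show ?thesis
    unfolding assms FGM_copula2_def by (simp add: power2_eq_square field_simps)
qed

lemma FGM_copula2_increment:
  fixes P C :: "nat \<Rightarrow> real"
  assumes "P 1 = (1 - q)\<^sup>2 - (1 - a)\<^sup>2" "P 2 = a\<^sup>2 - q\<^sup>2"
    and "C 1 = 1 - (1 - F)\<^sup>2" "C 2 = F\<^sup>2"
  shows "FGM_copula2 t a F - FGM_copula2 t q F = (a - q) * F + t / 4 * (P 2 - P 1) * (C 2 - C 1)"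
  unfolding assms FGM_copula2_def by (simp add: power2_eq_square algebra_simps)

lemma measure_pair_measure_Times:
  assumes "prob_space D1" "prob_space D2" "A \<in> sets D1" "B \<in> sets D2"
  shows "measure (D1 \<Otimes>\<^sub>M D2) (A \<times> B) = measure D1 A * measure D2 B"
proof -
  interpret D2: prob_space D2 by fact
  show ?thesis
    using D2.emeasure_pair_measure_Times[OF assms(3,4)] by (simp add: measure_def enn2real_mult)
qed

lemma ord_cdf_max:
  assumes "prob_space D" "sets D = sets borel"
  shows "ord_cdf D 2 x = (measure D {..x})\<^sup>2"
proof -
  have "{(a, b) \<in> space (D \<Otimes>\<^sub>M D). (if (2::nat) = 1 then min a b else max a b) \<le> x} = {..x} \<times> {..x}"
    using sets_eq_imp_space_eq[OF assms(2)] by (auto simp: space_pair_measure)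
  then show ?thesis
    using measure_pair_measure_Times[OF assms(1) assms(1)] assms(2) by (simp add: ord_cdf_def power2_eq_square)
qed

lemma ord_cdf_min:
  assumes "prob_space D" "sets D = sets borel"
  shows "ord_cdf D 1 x = 1 - (1 - measure D {..x})\<^sup>2"
proof -
  interpret D: prob_space D by fact
  interpret DD: prob_space "D \<Otimes>\<^sub>M D" by (intro prob_space_pair assms)
  have space: "space D = UNIV" using sets_eq_imp_space_eq[OF assms(2)] by simp
  have "{(a, b) \<in> space (D \<Otimes>\<^sub>M D). (if (1::nat) = 1 then min a b else max a b) \<le> x}
      = space (D \<Otimes>\<^sub>M D) - {x<..} \<times> {x<..}"
    using space by (auto simp: space_pair_measure)
  moreover have "measure D {x<..} = 1 - measure D {..x}"
    using D.prob_compl[of "{..x}"] assms(2) space by (simp add: Compl_eq_Diff_UNIV[symmetric])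
  ultimately show ?thesis
    using DD.prob_compl[of "{x<..} \<times> {x<..}"] measure_pair_measure_Times[OF assms(1) assms(1)] assms(2)
    by (simp add: ord_cdf_def power2_eq_square)
qed

lemma ord_pmf_max:
  assumes "prob_space D" "sets D = UNIV"
  shows "ord_pmf D 2 n = (measure D {..n})\<^sup>2 - (measure D {..<n})\<^sup>2"
proof -
  interpret DD: prob_space "D \<Otimes>\<^sub>M D" by (intro prob_space_pair assms)
  have "space D = UNIV" using sets.sets_into_space[of UNIV D] assms(2) by auto
  then have event: "{(a, b) \<in> space (D \<Otimes>\<^sub>M D). (if (2::nat) = 1 then min a b else max a b) = n}
      = {..n} \<times> {..n} - {..<n} \<times> {..<n}"
    by (auto simp: space_pair_measure)
  show ?thesis
    unfolding ord_pmf_def event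
    by (subst DD.finite_measure_Diff)
      (auto simp: measure_pair_measure_Times[OF assms(1) assms(1)] assms(2) power2_eq_square)
qed

lemma ord_pmf_min:
  assumes "prob_space D" "sets D = UNIV"
  shows "ord_pmf D 1 n = (1 - measure D {..<n})\<^sup>2 - (1 - measure D {..n})\<^sup>2"
proof -
  interpret D: prob_space D by fact
  interpret DD: prob_space "D \<Otimes>\<^sub>M D" by (intro prob_space_pair assms)
  have space: "space D = UNIV" using sets.sets_into_space[of UNIV D] assms(2) by auto
  then have event: "{(a, b) \<in> space (D \<Otimes>\<^sub>M D). (if (1::nat) = 1 then min a b else max a b) = n}
      = {n..} \<times> {n..} - {n<..} \<times> {n<..}"
    by (auto simp: space_pair_measure)
  have "measure D {n..} = 1 - measure D {..<n}" "measure D {n<..} = 1 - measure D {..n}"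
    using D.prob_compl[of "{..<n}"] D.prob_compl[of "{..n}"] assms(2) space
    by (simp_all add: Compl_eq_Diff_UNIV[symmetric])
  then show ?thesis
    unfolding ord_pmf_def event
    by (subst DD.finite_measure_Diff)
      (auto simp: measure_pair_measure_Times[OF assms(1) assms(1)] assms(2) power2_eq_square)
qed

lemma (in finite_measure) measure_eq_le_diff_less:
  fixes f :: "'a \<Rightarrow> 'b::order"
  assumes "{\<omega>\<in>space M. P \<omega> \<and> f \<omega> \<le> c} \<in> sets M" "{\<omega>\<in>space M. P \<omega> \<and> f \<omega> < c} \<in> sets M"
  shows "measure M {\<omega>\<in>space M. P \<omega> \<and> f \<omega> = c}
    = measure M {\<omega>\<in>space M. P \<omega> \<and> f \<omega> \<le> c} - measure M {\<omega>\<in>space M. P \<omega> \<and> f \<omega> < c}"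
proof -
  have "{\<omega>\<in>space M. P \<omega> \<and> f \<omega> = c}
      = {\<omega>\<in>space M. P \<omega> \<and> f \<omega> \<le> c} - {\<omega>\<in>space M. P \<omega> \<and> f \<omega> < c}"
    by auto
  also have "measure M \<dots> = measure M {\<omega>\<in>space M. P \<omega> \<and> f \<omega> \<le> c} - measure M {\<omega>\<in>space M. P \<omega> \<and> f \<omega> < c}"
    by (rule finite_measure_Diff[OF assms]) auto
  finally show ?thesis .
qed

lemma CRM_FGM_star_AE_N_zero:
  assumes crm: "CRM_FGM_star M N X \<theta>"
    and degenerate: "\<not> (\<exists>m. 0 < measure M {\<omega>\<in>space M. N \<omega> = m} \<and> 1 \<le> m)"
  shows "AE \<omega> in M. N \<omega> = 0"
proof -
  interpret prob_space M using crm by (simp add: CRM_FGM_star_def)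
  have [measurable]: "N \<in> M \<rightarrow>\<^sub>M count_space UNIV" using crm by (simp add: CRM_FGM_star_def)
  have "AE \<omega> in M. N \<omega> \<noteq> Suc i" for i
  proof -
    have "prob {\<omega>\<in>space M. N \<omega> = Suc i} = 0"
      using degenerate measure_nonneg[of M "{\<omega>\<in>space M. N \<omega> = Suc i}"]
      by (metis One_nat_def Suc_le_mono le0 less_eq_real_def)
    then show ?thesis by (subst (asm) prob_Collect_eq_0) auto
  qed
  then have "AE \<omega> in M. \<forall>i. N \<omega> \<noteq> Suc i" by (simp add: AE_all_countable)
  then show ?thesis by eventually_elim (metis not0_implies_Suc)
qed

lemma CRM_FGM_star_joint_cdf:
  assumes crm: "CRM_FGM_star M N X \<theta>"
  shows "measure M {\<omega>\<in>space M. N \<omega> \<le> m \<and> X 1 \<omega> \<le> x}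
    = FGM_copula2 (\<theta> 1 {0, 1}) (measure M {\<omega>\<in>space M. N \<omega> \<le> m}) (measure M {\<omega>\<in>space M. X 1 \<omega> \<le> x})"
proof (cases "\<exists>k. 0 < measure M {\<omega>\<in>space M. N \<omega> = k} \<and> 1 \<le> k")
  case True
  then have "\<forall>(n::nat) (x::nat \<Rightarrow> real).
      measure M {\<omega>\<in>space M. N \<omega> \<le> n \<and> (\<forall>j\<in>{1..1}. X j \<omega> \<le> x j)}
      = FGM_copula 1 (\<theta> 1) (\<lambda>i. if i = 0 then measure M {\<omega>\<in>space M. N \<omega> \<le> n}
                                else measure M {\<omega>\<in>space M. X 1 \<omega> \<le> x i})"
    using crm unfolding CRM_FGM_star_def by (elim conjE allE[of _ 1]) blast
  then have "measure M {\<omega>\<in>space M. N \<omega> \<le> m \<and> (\<forall>j\<in>{1..1::nat}. X j \<omega> \<le> x)}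
      = FGM_copula 1 (\<theta> 1) (\<lambda>i. if i = 0 then measure M {\<omega>\<in>space M. N \<omega> \<le> m}
                                else measure M {\<omega>\<in>space M. X 1 \<omega> \<le> x})"
    by (elim allE[of _ m] allE[of _ "\<lambda>_. x"])
  also have "\<dots> = FGM_copula2 (\<theta> 1 {0, 1}) (measure M {\<omega>\<in>space M. N \<omega> \<le> m}) (measure M {\<omega>\<in>space M. X 1 \<omega> \<le> x})"
    unfolding FGM_copula_1 by simp
  also have "{\<omega>\<in>space M. N \<omega> \<le> m \<and> (\<forall>j\<in>{1..1::nat}. X j \<omega> \<le> x)}
      = {\<omega>\<in>space M. N \<omega> \<le> m \<and> X 1 \<omega> \<le> x}"
    by auto
  finally show ?thesis .
next
  case False
  interpret prob_space M using crm by (simp add: CRM_FGM_star_def)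
  have [measurable]: "N \<in> M \<rightarrow>\<^sub>M count_space UNIV" "X 1 \<in> borel_measurable M"
    using crm by (simp_all add: CRM_FGM_star_def)
  have N0: "AE \<omega> in M. N \<omega> = 0" using CRM_FGM_star_AE_N_zero[OF crm False] .
  have "prob {\<omega>\<in>space M. N \<omega> \<le> m} = prob {\<omega>\<in>space M. True}"
    using N0 by (intro prob_eq_AE) auto
  moreover have "prob {\<omega>\<in>space M. N \<omega> \<le> m \<and> X 1 \<omega> \<le> x} = prob {\<omega>\<in>space M. X 1 \<omega> \<le> x}"
  proof (rule prob_eq_AE)
    show "AE \<omega> in M. (N \<omega> \<le> m \<and> X 1 \<omega> \<le> x) = (X 1 \<omega> \<le> x)"
      using N0 by eventually_elim simp
  qed measurable
  ultimately show ?thesis by (simp add: FGM_copula2_def prob_space)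
qed

lemma CRM_FGM_star_joint_cdf_less:
  assumes crm: "CRM_FGM_star M N X \<theta>"
  shows "measure M {\<omega>\<in>space M. N \<omega> < n \<and> X 1 \<omega> \<le> x}
    = FGM_copula2 (\<theta> 1 {0, 1}) (measure M {\<omega>\<in>space M. N \<omega> < n}) (measure M {\<omega>\<in>space M. X 1 \<omega> \<le> x})"
proof (cases n)
  case 0
  then show ?thesis by (simp add: FGM_copula2_def)
next
  case (Suc m)
  then show ?thesis using CRM_FGM_star_joint_cdf[OF crm, of m x] by (simp add: less_Suc_eq_le)
qed

lemma CRM_FGM_star_joint_prob:
  assumes crm: "CRM_FGM_star M N X \<theta>"
  shows "measure M {\<omega>\<in>space M. X 1 \<omega> \<le> x \<and> N \<omega> = n}
    = FGM_copula2 (\<theta> 1 {0, 1}) (measure M {\<omega>\<in>space M. N \<omega> \<le> n}) (measure M {\<omega>\<in>space M. X 1 \<omega> \<le> x})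
    - FGM_copula2 (\<theta> 1 {0, 1}) (measure M {\<omega>\<in>space M. N \<omega> < n}) (measure M {\<omega>\<in>space M. X 1 \<omega> \<le> x})"
proof -
  interpret prob_space M using crm by (simp add: CRM_FGM_star_def)
  have [measurable]: "N \<in> M \<rightarrow>\<^sub>M count_space UNIV" "X 1 \<in> borel_measurable M"
    using crm by (simp_all add: CRM_FGM_star_def)
  have "prob {\<omega>\<in>space M. X 1 \<omega> \<le> x \<and> N \<omega> = n}
      = prob {\<omega>\<in>space M. X 1 \<omega> \<le> x \<and> N \<omega> \<le> n} - prob {\<omega>\<in>space M. X 1 \<omega> \<le> x \<and> N \<omega> < n}"
    by (rule measure_eq_le_diff_less) measurable
  then show ?thesis
    using CRM_FGM_star_joint_cdf[OF crm, of n x] CRM_FGM_star_joint_cdf_less[OF crm, of n x]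
    by (simp only: conj_commute)
qed

theorem mainTheorem3:
  fixes M :: "'a measure" and N :: "'a \<Rightarrow> nat" and X :: "nat \<Rightarrow> 'a \<Rightarrow> real"
    and \<theta> :: "nat \<Rightarrow> nat set \<Rightarrow> real" and n :: nat and x :: real
  assumes crm: "CRM_FGM_star M N X \<theta>"
    and n_supp: "0 < measure M {\<omega>\<in>space M. N \<omega> = n}"
    and x_nonneg: "0 \<le> x"
  shows
    "let \<gamma>N = measure M {\<omega>\<in>space M. N \<omega> = n};
         FX = measure M {\<omega>\<in>space M. X 1 \<omega> \<le> x};
         FXcond = measure M {\<omega>\<in>space M. X 1 \<omega> \<le> x \<and> N \<omega> = n} / \<gamma>N;
         DN = distr M (count_space UNIV) N;
         DX = distr M borel (X 1);
         \<theta>01 = \<theta> 1 {0, 1};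
         f = (\<lambda>i0 i1::nat. (1 + (-1) ^ (i0 + i1) * \<theta>01) / 4)
     in FXcond = (1 / \<gamma>N) * (\<Sum>i0\<in>{0,1}. \<Sum>i1\<in>{0,1}.
                     f i0 i1 * ord_pmf DN (1 + i0) n * ord_cdf DX (1 + i1) x)
      \<and> FXcond = FX + \<theta>01 / 4 * ((ord_pmf DN 2 n - ord_pmf DN 1 n) / \<gamma>N)
                        * (ord_cdf DX 2 x - ord_cdf DX 1 x)"
proof -
  interpret prob_space M using crm by (simp add: CRM_FGM_star_def)
  have N_meas: "N \<in> M \<rightarrow>\<^sub>M count_space UNIV" and X_meas: "X 1 \<in> borel_measurable M"
    using crm by (simp_all add: CRM_FGM_star_def)
  define DN where "DN = distr M (count_space UNIV) N"
  define DX where "DX = distr M borel (X 1)"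
  define a where "a = prob {\<omega>\<in>space M. N \<omega> \<le> n}"
  define q where "q = prob {\<omega>\<in>space M. N \<omega> < n}"
  define F where "F = prob {\<omega>\<in>space M. X 1 \<omega> \<le> x}"
  define t where "t = \<theta> 1 {0, 1}"
  have DN: "prob_space DN" "sets DN = UNIV" "measure DN {..n} = a" "measure DN {..<n} = q"
    unfolding DN_def a_def q_def using prob_space_distr[OF N_meas]
    by (simp_all add: measure_distr[OF N_meas] vimage_def Int_def conj_commute)
  have DX: "prob_space DX" "sets DX = sets borel" "measure DX {..x} = F"
    unfolding DX_def F_def using prob_space_distr[OF X_meas] measure_distr[OF X_meas, of "{..x}"]
    by (simp_all add: vimage_def Int_def conj_commute)
  have P: "ord_pmf DN 1 n = (1 - q)\<^sup>2 - (1 - a)\<^sup>2" "ord_pmf DN 2 n = a\<^sup>2 - q\<^sup>2"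
    using ord_pmf_min[OF DN(1,2)] ord_pmf_max[OF DN(1,2)] DN(3,4) by simp_all
  have C: "ord_cdf DX 1 x = 1 - (1 - F)\<^sup>2" "ord_cdf DX 2 x = F\<^sup>2"
    using ord_cdf_min[OF DX(1,2)] ord_cdf_max[OF DX(1,2)] DX(3) by simp_all
  have \<gamma>: "prob {\<omega>\<in>space M. N \<omega> = n} = a - q"
    using measure_eq_le_diff_less[of "\<lambda>_. True" N n] N_meas unfolding a_def q_def by simp
  with n_supp have "a - q \<noteq> 0" by simp
  then show ?thesis
    unfolding Let_def DN_def[symmetric] DX_def[symmetric] t_def[symmetric] F_def[symmetric] \<gamma>
      CRM_FGM_star_joint_prob[OF crm, of x n, folded a_def q_def F_def t_def]
      FGM_copula2_increment[OF P C] FGM_copula2_increment_mixture[OF P C, symmetric]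
    by (simp add: field_simps)
qed

end
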